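(* Let $C\subseteq\mathbb{R}^n$ be a nonempty compact convex set and let $f:\mathbb{R}^n\to\mathbb{R}$ be an abs-smooth function such that, for every $x\in C$, its piecewise linearization $f_{PL,x}$ is convex on $C$. Let $\mathcal{C}_f$ be the curvature constant of $f$ on $C$ and let $x^*$ be a minimizer of $f$ on $C$. Let $x\in C$, $\alpha\in(0,1]$ and $\epsilon\ge0$ be arbitrary, and let $v\in C$ satisfy $$\Delta f(x;\alpha(v-x)) \le \min_{w\in C}\Delta f(x;\alpha(w-x)) + \tfrac12\epsilon\alpha^2\,\mathcal{C}_f .$$ Then $$f(x)-f(x^* ) \le \frac{-\Delta f(x;\alpha(v-x))}{\alpha} + \frac12\big(1+\alpha\epsilon\big)\mathcal{C}_f .$$
   Context: A function $f:\mathbb{R}^n\to\mathbb{R}$ is abs-smooth if it is locally Lipschitz and admits an abs-smooth form: for some $s\in\mathbb{N}\cup\{0\}$ there are $F=(F_1,\dots,F_s)\in\mathcal{C}^d(\mathbb{R}^{n+s+s},\mathbb{R}^s)$ and $\varphi\in\mathcal{C}^d(\mathbb{R}^{n+s},\mathbb{R})$ with $d\ge1$ such that $y=f(x)$ is computed by $z_i=F_i(x,z_1,\dots,z_{i-1},|z_1|,\dots,|z_{i-1}|)$ for $i=1,\dots,s$ and $y=\varphi(x,z)$. For a point $\mathring{x}$, write $\mathring z=z(\mathring x)$ and let $Z=\partial_x F$, $M=\partial_z F$, $L=\partial_{|z|}F$ (evaluated at $(\mathring x,\mathring z,|\mathring z|)$; $M,L$ strictly lower triangular), $a=\partial_x\varphi$,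 $b=\partial_z\varphi$ (evaluated at $(\mathring x,\mathring z)$). The piecewise linearization of $f$ at $\mathring x$ is $f_{PL,\mathring x}(x)=d_0+a^Tx+b^Tz$ where $z$ solves $z=c+Zx+Mz+L|z|$ (uniquely, recursively), with constants $c,d_0$ chosen so that $f_{PL,\mathring x}(\mathring x)=f(\mathring x)$ (namely $c=\mathring z-Z\mathring x-M\mathring z-L|\mathring z|$, $d_0=f(\mathring x)-a^T\mathring x-b^T\mathring z$). The abs-linearization is $\Delta f(\mathring x;x-\mathring x):=f_{PL,\mathring x}(x)-f(\mathring x)$. "$f_{PL,x}$ convex on $C$" means $f_{PL,x}(\lambda y+(1-\lambda)w)\le\lambda f_{PL,x}(y)+(1-\lambda)f_{PL,x}(w)$ for all $y,w\in C$, $\lambda\in[0,1]$. The curvature constant of $f$ on $C$ is $$\mathcal{C}_f:=\sup_{x,v\in C,\ \alpha\in(0,1],\ y=x+\alpha(v-x)}\frac{2}{\alpha^2}\big|f(y)-f(x)-\Delta f(x;y-x)\big|,$$ which is finite for compact $C$. *)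

theory Defs
  imports "HOL-Analysis.Analysis" "HOL-Library.Extended_Real"
begin

text \<open>Vectors: x in R^n is real^'n; the switching vector z in R^s is real^('s::{finite,linorder}),
  where the index type 's is finite and linearly ordered (ordering of z_1,...,z_s).\<close>

definition vabs :: "real^('s::{finite,linorder}) \<Rightarrow> real^('s::{finite,linorder})" where
  "vabs z = (\<chi> j. \<bar>z $ j\<bar>)"

definition C1_map :: "('a::real_normed_vector \<Rightarrow> 'b::real_normed_vector) \<Rightarrow> bool" where
  "C1_map G \<longleftrightarrow> (\<exists>G'. (\<forall>p. (G has_derivative blinfun_apply (G' p)) (at p)) \<and> continuous_on UNIV G')"

text \<open>F_i depends only on x, z_1..z_{i-1}, |z_1|..|z_{i-1}| (third argument = |z|-slot).\<close>
definition lower_triangular ::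
  "(real^'n \<Rightarrow> real^('s::{finite,linorder}) \<Rightarrow> real^('s::{finite,linorder}) \<Rightarrow> real^('s::{finite,linorder})) \<Rightarrow> bool" where
  "lower_triangular F \<longleftrightarrow>
     (\<forall>x z z' w w' i. (\<forall>j<i. z $ j = z' $ j \<and> w $ j = w' $ j) \<longrightarrow> F x z w $ i = F x z' w' $ i)"

text \<open>The switching vector z(x): the (recursively unique) solution of z = F(x, z, |z|).\<close>
definition switch_vec ::
  "(real^'n \<Rightarrow> real^('s::{finite,linorder}) \<Rightarrow> real^('s::{finite,linorder}) \<Rightarrow> real^('s::{finite,linorder})) \<Rightarrow> real^'n \<Rightarrow> real^('s::{finite,linorder})" where
  "switch_vec F x = (THE z. z = F x z (vabs z))"

definition locally_lipschitz :: "(real^'n \<Rightarrow> real) \<Rightarrow> bool" where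
  "locally_lipschitz f \<longleftrightarrow> (\<forall>x. \<exists>e>0. \<exists>K. K-lipschitz_on (ball x e) f)"

definition abs_smooth_form ::
  "(real^'n \<Rightarrow> real) \<Rightarrow> (real^'n \<Rightarrow> real^('s::{finite,linorder}) \<Rightarrow> real^('s::{finite,linorder}) \<Rightarrow> real^('s::{finite,linorder}))
    \<Rightarrow> (real^'n \<Rightarrow> real^('s::{finite,linorder}) \<Rightarrow> real) \<Rightarrow> bool" where
  "abs_smooth_form f F \<phi> \<longleftrightarrow>
     locally_lipschitz f \<and>
     C1_map (\<lambda>(x, z, w). F x z w) \<and> C1_map (\<lambda>(x, z). \<phi> x z) \<and>
     lower_triangular F \<and>
     (\<forall>x. f x = \<phi> x (switch_vec F x))"

text \<open>With D = derivative of (x,z,w) |-> F x z w at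
  (x0, z0, |z0|), i.e. D(h,k,l) = Z h + M k + L l, the equation z = c + Z x + M z + L|z|
  with c = z0 - Z x0 - M z0 - L|z0| reads z = z0 + D(x - x0, z - z0, |z| - |z0|);
  and f_PL(x) = d0 + a^T x + b^T z with d0 = f(x0) - a^T x0 - b^T z0 reads
  f(x0) + Dphi(x - x0, z - z0), Dphi = derivative of (x,z) |-> phi x z at (x0,z0).\<close>
definition pl_switch ::
  "(real^'n \<Rightarrow> real^('s::{finite,linorder}) \<Rightarrow> real^('s::{finite,linorder}) \<Rightarrow> real^('s::{finite,linorder})) \<Rightarrow> real^'n \<Rightarrow> real^'n \<Rightarrow> real^('s::{finite,linorder})" where
  "pl_switch F x0 x =
    (let z0 = switch_vec F x0;
         D = frechet_derivative (\<lambda>(x, z, w). F x z w) (at (x0, z0, vabs z0))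
     in THE z. z = z0 + D (x - x0, z - z0, vabs z - vabs z0))"

definition f_PL ::
  "(real^'n \<Rightarrow> real) \<Rightarrow> (real^'n \<Rightarrow> real^('s::{finite,linorder}) \<Rightarrow> real^('s::{finite,linorder}) \<Rightarrow> real^('s::{finite,linorder}))
    \<Rightarrow> (real^'n \<Rightarrow> real^('s::{finite,linorder}) \<Rightarrow> real) \<Rightarrow> real^'n \<Rightarrow> real^'n \<Rightarrow> real" where
  "f_PL f F \<phi> x0 x =
    (let z0 = switch_vec F x0;
         D\<phi> = frechet_derivative (\<lambda>(x, z). \<phi> x z) (at (x0, z0))
     in f x0 + D\<phi> (x - x0, pl_switch F x0 x - z0))"

definition abs_lin ::
  "(real^'n \<Rightarrow> real) \<Rightarrow> (real^'n \<Rightarrow> real^('s::{finite,linorder}) \<Rightarrow> real^('s::{finite,linorder}) \<Rightarrow> real^('s::{finite,linorder}))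
    \<Rightarrow> (real^'n \<Rightarrow> real^('s::{finite,linorder}) \<Rightarrow> real) \<Rightarrow> real^'n \<Rightarrow> real^'n \<Rightarrow> real" where
  "abs_lin f F \<phi> x0 d = f_PL f F \<phi> x0 (x0 + d) - f x0"

definition curvature_const ::
  "(real^'n \<Rightarrow> real) \<Rightarrow> (real^'n \<Rightarrow> real^('s::{finite,linorder}) \<Rightarrow> real^('s::{finite,linorder}) \<Rightarrow> real^('s::{finite,linorder}))
    \<Rightarrow> (real^'n \<Rightarrow> real^('s::{finite,linorder}) \<Rightarrow> real) \<Rightarrow> (real^'n) set \<Rightarrow> ereal" where
  "curvature_const f F \<phi> C =
    (SUP (x, v, \<alpha>) \<in> {(x, v, \<alpha>). x \<in> C \<and> v \<in> C \<and> \<alpha> \<in> {0<..1}}.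
       (let y = x + \<alpha> *\<^sub>R (v - x)
        in ereal (2 / \<alpha>\<^sup>2 * \<bar>f y - f x - abs_lin f F \<phi> x (y - x)\<bar>)))"

end

theory Submission
  imports Defs
begin

text \<open>Convexity of \<open>f_PL,x\<close> along the segment from \<open>x\<close> to \<open>x*\<close> gives
  \<open>\<Delta>f(x;\<alpha>(x*-x)) \<le> \<alpha> \<Delta>f(x;x*-x)\<close>, and the curvature bound with step \<open>1\<close> gives
  \<open>\<Delta>f(x;x*-x) \<le> f(x*) - f(x) + C\<^sub>f/2\<close>. Combined with the near-optimality of \<open>v\<close> this is the
  claim. The only subtle point is \<open>\<Delta>f(x;0) = 0\<close>, which
  follows from finiteness of \<open>C\<^sub>f\<close>: the error at \<open>y = x\<close> would otherwise blow up like \<open>1/\<alpha>\<^sup>2\<close>.\<close>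

lemma curvature_const_upper:
  assumes "a \<in> C" "b \<in> C" "0 < t" "t \<le> 1"
  shows "ereal (2 / t\<^sup>2 * \<bar>f (a + t *\<^sub>R (b - a)) - f a - abs_lin f F \<phi> a (t *\<^sub>R (b - a))\<bar>)
         \<le> curvature_const f F \<phi> C"
  unfolding curvature_const_def
  by (rule SUP_upper2[where i="(a, b, t)"]) (use assms in auto)

lemma curvature_const_nonneg:
  assumes "x \<in> C"
  shows "0 \<le> curvature_const f F \<phi> C"
  by (rule order_trans[OF _ curvature_const_upper[OF assms assms, of 1]]) simp_all

lemma abs_lin_error_le:
  assumes "curvature_const f F \<phi> C = ereal k"
    and "a \<in> C" "b \<in> C" "0 < t" "t \<le> 1"
  shows "\<bar>f (a + t *\<^sub>R (b - a)) - f a - abs_lin f F \<phi> a (t *\<^sub>R (b - a))\<bar> \<le> k * t\<^sup>2 / 2"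
  using curvature_const_upper[OF assms(2-5), of f F \<phi>] assms(1,4)
  by (simp add: field_simps)

lemma eq_0_if_abs_le_square:
  fixes c K :: real
  assumes "\<And>t. 0 < t \<Longrightarrow> t \<le> 1 \<Longrightarrow> \<bar>c\<bar> \<le> K * t\<^sup>2"
  shows "c = 0"
proof (rule ccontr)
  assume "c \<noteq> 0"
  define t where "t = min 1 (\<bar>c\<bar> / (\<bar>K\<bar> + 1))"
  have t: "0 < t" "t \<le> 1" using \<open>c \<noteq> 0\<close> by (auto simp: t_def)
  have "\<bar>c\<bar> \<le> K * (t * t)"
    using assms[OF t] by (simp add: power2_eq_square)
  also have "\<dots> \<le> \<bar>K\<bar> * (t * t)"
    by (intro mult_right_mono) auto
  also have "\<dots> \<le> \<bar>K\<bar> * t"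
    using t by (simp add: mult_left_mono mult_right_le_one_le)
  also have "\<dots> < (\<bar>K\<bar> + 1) * t"
    using t by simp
  also have "\<dots> \<le> \<bar>c\<bar>"
    using pos_le_divide_eq[of "\<bar>K\<bar> + 1" t "\<bar>c\<bar>"] by (simp add: t_def mult.commute)
  finally show False by simp
qed

lemma abs_lin_zero_if_curvature_finite:
  assumes "curvature_const f F \<phi> C = ereal k" and "x \<in> C"
  shows "abs_lin f F \<phi> x 0 = 0"
  by (rule eq_0_if_abs_le_square[where K = "k / 2"])
     (use abs_lin_error_le[OF assms(1) assms(2) assms(2)] in simp)

lemma abs_lin_scale_le:
  assumes "convex_on C (f_PL f F \<phi> x)" and "abs_lin f F \<phi> x 0 = 0"
    and "x \<in> C" "y \<in> C" "0 \<le> \<alpha>" "\<alpha> \<le> 1"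
  shows "abs_lin f F \<phi> x (\<alpha> *\<^sub>R (y - x)) \<le> \<alpha> * abs_lin f F \<phi> x (y - x)"
proof -
  have "(1 - \<alpha>) *\<^sub>R x + \<alpha> *\<^sub>R y = x + \<alpha> *\<^sub>R (y - x)"
    by (simp add: algebra_simps)
  moreover have "f_PL f F \<phi> x x = f x"
    using assms(2) by (simp add: abs_lin_def)
  ultimately show ?thesis
    using convex_onD[OF assms(1), of \<alpha> x y] assms(3-6)
    by (simp add: abs_lin_def algebra_simps)
qed

lemma primal_gap_le_abs_lin_step:
  assumes K: "curvature_const f F \<phi> C = ereal k"
    and cvx: "convex_on C (f_PL f F \<phi> x)"
    and "x \<in> C" "xstar \<in> C" "0 < \<alpha>" "\<alpha> \<le> 1"
    and v: "abs_lin f F \<phi> x (\<alpha> *\<^sub>R (v - x))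
              \<le> abs_lin f F \<phi> x (\<alpha> *\<^sub>R (xstar - x)) + \<epsilon> * \<alpha>\<^sup>2 * k / 2"
  shows "f x - f xstar \<le> - abs_lin f F \<phi> x (\<alpha> *\<^sub>R (v - x)) / \<alpha> + (1 + \<alpha> * \<epsilon>) * k / 2"
proof -
  let ?D = "abs_lin f F \<phi> x"
  have "?D (\<alpha> *\<^sub>R (xstar - x)) \<le> \<alpha> * ?D (xstar - x)"
    using abs_lin_scale_le[OF cvx abs_lin_zero_if_curvature_finite[OF K]] assms(3-6) by simp
  moreover have "?D (xstar - x) \<le> f xstar - f x + k / 2"
    using abs_lin_error_le[OF K \<open>x \<in> C\<close> \<open>xstar \<in> C\<close>, of 1]
      abs_ge_minus_self[of "f xstar - f x - ?D (xstar - x)"] by simp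
  ultimately have "?D (\<alpha> *\<^sub>R (v - x)) \<le> \<alpha> * (f xstar - f x + k / 2 + \<epsilon> * \<alpha> * k / 2)"
    using v mult_left_mono[of _ _ \<alpha>] \<open>0 < \<alpha>\<close>
    by (fastforce simp: algebra_simps power2_eq_square)
  then show ?thesis
    using \<open>0 < \<alpha>\<close> by (simp add: divide_le_eq field_simps)
qed

theorem mainTheorem2:
  fixes f :: "real^'n \<Rightarrow> real"
    and F :: "real^'n \<Rightarrow> real^('s::{finite,linorder}) \<Rightarrow> real^('s::{finite,linorder}) \<Rightarrow> real^('s::{finite,linorder})"
    and \<phi> :: "real^'n \<Rightarrow> real^('s::{finite,linorder}) \<Rightarrow> real"
    and C :: "(real^'n) set"
    and xstar x v :: "real^'n" and \<alpha> \<epsilon> :: real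
  assumes "C \<noteq> {}" and "compact C" and "convex C"
    and "abs_smooth_form f F \<phi>"
    and "\<forall>y\<in>C. convex_on C (f_PL f F \<phi> y)"
    and "xstar \<in> C" and "\<forall>y\<in>C. f xstar \<le> f y"
    and "x \<in> C" and "0 < \<alpha>" and "\<alpha> \<le> 1" and "0 \<le> \<epsilon>"
    and "v \<in> C"
    and "ereal (abs_lin f F \<phi> x (\<alpha> *\<^sub>R (v - x)))
           \<le> (INF w\<in>C. ereal (abs_lin f F \<phi> x (\<alpha> *\<^sub>R (w - x))))
             + ereal (1/2 * \<epsilon> * \<alpha>\<^sup>2) * curvature_const f F \<phi> C"
  shows "ereal (f x - f xstar)
           \<le> ereal (- abs_lin f F \<phi> x (\<alpha> *\<^sub>R (v - x)) / \<alpha>)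
             + ereal (1/2 * (1 + \<alpha> * \<epsilon>)) * curvature_const f F \<phi> C"
proof (cases "curvature_const f F \<phi> C")
  case PInf
  have "0 < 1 + \<alpha> * \<epsilon>" using assms(9,11) by (simp add: add_pos_nonneg)
  then show ?thesis using PInf by simp
next
  case MInf
  then show ?thesis using curvature_const_nonneg[OF \<open>x \<in> C\<close>, of f F \<phi>] by simp
next
  case (real k)
  have "(INF w\<in>C. ereal (abs_lin f F \<phi> x (\<alpha> *\<^sub>R (w - x))))
          \<le> ereal (abs_lin f F \<phi> x (\<alpha> *\<^sub>R (xstar - x)))"
    by (rule INF_lower) (rule \<open>xstar \<in> C\<close>)
  then have "abs_lin f F \<phi> x (\<alpha> *\<^sub>R (v - x))
               \<le> abs_lin f F \<phi> x (\<alpha> *\<^sub>R (xstar - x)) + \<epsilon> * \<alpha>\<^sup>2 * k / 2"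
    using assms(13) real by (fastforce dest: order_trans[OF _ add_right_mono])
  from primal_gap_le_abs_lin_step[OF real _ \<open>x \<in> C\<close> \<open>xstar \<in> C\<close> \<open>0 < \<alpha>\<close> \<open>\<alpha> \<le> 1\<close> this] assms(5,8)
  show ?thesis using real by simp
qed

end
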